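(* Let $(\mathcal{C},\mathbb{E},\mathfrak{s})$ be an extriangulated category with enough projective objects and enough injective objects, and let $(\mathcal{I},\mathcal{J})$ be an $\mathbb{E}$-cotorsion pair of ideals. Then $\mathcal{I}$ is a special precovering ideal if and only if $\mathcal{J}$ is a special preenveloping ideal.
   Context: An extriangulated category $(\mathcal{C},\mathbb{E},\mathfrak{s})$ (Nakaoka–Palu): additive $\mathcal{C}$, biadditive $\mathbb{E}:\mathcal{C}^{\mathrm{op}}\times\mathcal{C}\to\mathrm{Ab}$, additive realization $\mathfrak{s}$ assigning to each $\delta\in\mathbb{E}(C,A)$ an equivalence class of sequences $A\to B\to C$, forming $\mathbb{E}$-triangles $A\to B\to C\overset{\delta}{\dashrightarrow}$, satisfying (ET1)–(ET4), (ET3)$^{\mathrm{op}}$, (ET4)$^{\mathrm{op}}$. Notation $a_\star\delta=\mathbb{E}(C,a)(\delta)$, $c^\star\delta=\mathbb{E}(c,A)(\delta)$; a morphism of $\mathbb{E}$-triangles is a commuting triple $(a,b,c)$ with $a_\star\delta=c^\star\delta'$. An object $E$ is injective if $\mathbb{E}(C,E)=0$ for all $C$ (equivalently it has the extension property along $\mathbb{E}$-inflations); projective objects dually ($\mathbb{E}(P,A)=0$ for all $A$). Enough injective objects: every $A$ admits an $\mathbb{E}$-triangle $A\to E\to C\overset{\delta}{\dashrightarrow}$ with $E$ injective; enough projective objects: every $C$ admits an $\mathbb{E}$-triangle $K\to P\to C\overset{\delta}{\dashrightarrow}$ with $P$ projective. An ideal: class of morphisms with zeros, closed under sums and two-sided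 composition. $\mathcal{M}^{\perp_{\mathbb{E}}}=\{g:A\to Y\mid m^\star g_\star\delta=0\ \forall m\in\mathcal{M},\,m:X\to C,\ \forall\delta\in\mathbb{E}(C,A)\}$; ${}^{\perp_{\mathbb{E}}}\mathcal{M}=\{g:X\to C\mid g^\star m_\star\delta=0\ \forall m\in\mathcal{M},\,m:A\to Y,\ \forall\delta\in\mathbb{E}(C,A)\}$. An $\mathbb{E}$-cotorsion pair: $\mathcal{I}={}^{\perp_{\mathbb{E}}}\mathcal{J}$ and $\mathcal{J}=\mathcal{I}^{\perp_{\mathbb{E}}}$. Special $\mathcal{I}$-precover of $C$: $i:X\to C$ in $\mathcal{I}$ with $\mathbb{E}$-triangles $A\to B\to C\overset{\delta}{\dashrightarrow}$, $A'\to X\xrightarrow{i}C\overset{\delta'}{\dashrightarrow}$ and a morphism $(j,b,\mathrm{id}_C)$ between them, $j\in\mathcal{I}^{\perp_{\mathbb{E}}}$. Special $\mathcal{J}$-preenvelope of $A$: $e:A\to X$ in $\mathcal{J}$ with $\mathbb{E}$-triangles $A\xrightarrow{e}X\to Y\overset{\delta}{\dashrightarrow}$, $A\to B\to C\overset{\delta'}{\dashrightarrow}$ and a morphism $(\mathrm{id}_A,b,j)$ from the first to the second, $j\in{}^{\perp_{\mathbb{E}}}\mathcal{J}$. Special precovering/preenveloping ideal: every object has such a precover/preenvelope. *)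

theory Defs
  imports Main
begin

text \<open>
  Objects are the elements of type 'o, morphisms the elements of type 'm
  (each carrying its domain and codomain), extensions the elements of type 'e
  (each delta carrying the pair (C,A) with delta in E(C,A)).
  Composition: cmp g f = g o f (meaningful when Cod f = Dom g).
  push a delta = a_star delta,  pull c delta = c^star delta.
  realizes delta x y : the sequence A -x-> B -y-> C belongs to the
  equivalence class s(delta).
\<close>

record ('o,'m,'e) extri =
  Dom :: "'m \<Rightarrow> 'o"
  Cod :: "'m \<Rightarrow> 'o"
  cmp :: "'m \<Rightarrow> 'm \<Rightarrow> 'm"
  idm :: "'o \<Rightarrow> 'm"
  madd :: "'m \<Rightarrow> 'm \<Rightarrow> 'm"
  mzero :: "'o \<Rightarrow> 'o \<Rightarrow> 'm"
  mneg :: "'m \<Rightarrow> 'm"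
  Edom :: "'e \<Rightarrow> 'o"
  Ecod :: "'e \<Rightarrow> 'o"
  eadd :: "'e \<Rightarrow> 'e \<Rightarrow> 'e"
  ezero :: "'o \<Rightarrow> 'o \<Rightarrow> 'e"
  eneg :: "'e \<Rightarrow> 'e"
  push :: "'m \<Rightarrow> 'e \<Rightarrow> 'e"
  pull :: "'m \<Rightarrow> 'e \<Rightarrow> 'e"
  realizes :: "'e \<Rightarrow> 'm \<Rightarrow> 'm \<Rightarrow> bool"

definition hom :: "('o,'m,'e) extri \<Rightarrow> 'o \<Rightarrow> 'o \<Rightarrow> 'm \<Rightarrow> bool" where
  "hom X A B f \<longleftrightarrow> Dom X f = A \<and> Cod X f = B"

definition ext :: "('o,'m,'e) extri \<Rightarrow> 'o \<Rightarrow> 'o \<Rightarrow> 'e \<Rightarrow> bool" where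
  "ext X C A d \<longleftrightarrow> Edom X d = C \<and> Ecod X d = A"

definition par :: "('o,'m,'e) extri \<Rightarrow> 'm \<Rightarrow> 'm \<Rightarrow> bool" where
  "par X f g \<longleftrightarrow> Dom X f = Dom X g \<and> Cod X f = Cod X g"

definition is_iso :: "('o,'m,'e) extri \<Rightarrow> 'm \<Rightarrow> bool" where
  "is_iso X b \<longleftrightarrow> (\<exists>b'. hom X (Cod X b) (Dom X b) b' \<and>
      cmp X b' b = idm X (Dom X b) \<and> cmp X b b' = idm X (Cod X b))"

definition is_biprod :: "('o,'m,'e) extri \<Rightarrow> 'o \<Rightarrow> 'o \<Rightarrow> 'o \<Rightarrow> 'm \<Rightarrow> 'm \<Rightarrow> 'm \<Rightarrow> 'm \<Rightarrow> bool" where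
  "is_biprod X A B S i1 i2 p1 p2 \<longleftrightarrow>
     hom X A S i1 \<and> hom X B S i2 \<and> hom X S A p1 \<and> hom X S B p2 \<and>
     cmp X p1 i1 = idm X A \<and> cmp X p2 i2 = idm X B \<and>
     cmp X p2 i1 = mzero X A B \<and> cmp X p1 i2 = mzero X B A \<and>
     madd X (cmp X i1 p1) (cmp X i2 p2) = idm X S"

definition additive_cat :: "('o,'m,'e) extri \<Rightarrow> bool" where
  "additive_cat X \<longleftrightarrow>
     (\<forall>A. hom X A A (idm X A)) \<and>
     (\<forall>f g. Cod X f = Dom X g \<longrightarrow> hom X (Dom X f) (Cod X g) (cmp X g f)) \<and>
     (\<forall>f. cmp X (idm X (Cod X f)) f = f \<and> cmp X f (idm X (Dom X f)) = f) \<and>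
     (\<forall>f g h. Cod X f = Dom X g \<and> Cod X g = Dom X h \<longrightarrow>
        cmp X h (cmp X g f) = cmp X (cmp X h g) f) \<and>
     \<comment> \<open>each hom set is an abelian group\<close>
     (\<forall>A B. hom X A B (mzero X A B)) \<and>
     (\<forall>f g. par X f g \<longrightarrow> hom X (Dom X f) (Cod X f) (madd X f g)) \<and>
     (\<forall>f. hom X (Dom X f) (Cod X f) (mneg X f)) \<and>
     (\<forall>f g h. par X f g \<and> par X g h \<longrightarrow> madd X (madd X f g) h = madd X f (madd X g h)) \<and>
     (\<forall>f g. par X f g \<longrightarrow> madd X f g = madd X g f) \<and>
     (\<forall>f. madd X f (mzero X (Dom X f) (Cod X f)) = f) \<and>
     (\<forall>f. madd X f (mneg X f) = mzero X (Dom X f) (Cod X f)) \<and>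
     \<comment> \<open>composition is bilinear\<close>
     (\<forall>f g g'. Cod X f = Dom X g \<and> par X g g' \<longrightarrow>
        cmp X (madd X g g') f = madd X (cmp X g f) (cmp X g' f)) \<and>
     (\<forall>f f' g. Cod X f = Dom X g \<and> par X f f' \<longrightarrow>
        cmp X g (madd X f f') = madd X (cmp X g f) (cmp X g f')) \<and>
     \<comment> \<open>zero object\<close>
     (\<exists>Z. \<forall>A f. (hom X Z A f \<longrightarrow> f = mzero X Z A) \<and> (hom X A Z f \<longrightarrow> f = mzero X A Z)) \<and>
     \<comment> \<open>binary biproducts\<close>
     (\<forall>A B. \<exists>S i1 i2 p1 p2. is_biprod X A B S i1 i2 p1 p2)"

definition biadditive_E :: "('o,'m,'e) extri \<Rightarrow> bool" where
  "biadditive_E X \<longleftrightarrow>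
     \<comment> \<open>each E(C,A) is an abelian group\<close>
     (\<forall>C A. ext X C A (ezero X C A)) \<and>
     (\<forall>d d'. ext X (Edom X d) (Ecod X d) d' \<longrightarrow> ext X (Edom X d) (Ecod X d) (eadd X d d')) \<and>
     (\<forall>d. ext X (Edom X d) (Ecod X d) (eneg X d)) \<and>
     (\<forall>d d' d''. ext X (Edom X d) (Ecod X d) d' \<and> ext X (Edom X d) (Ecod X d) d'' \<longrightarrow>
        eadd X (eadd X d d') d'' = eadd X d (eadd X d' d'')) \<and>
     (\<forall>d d'. ext X (Edom X d) (Ecod X d) d' \<longrightarrow> eadd X d d' = eadd X d' d) \<and>
     (\<forall>d. eadd X d (ezero X (Edom X d) (Ecod X d)) = d) \<and>
     (\<forall>d. eadd X d (eneg X d) = ezero X (Edom X d) (Ecod X d)) \<and>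
     \<comment> \<open>typing of the actions\<close>
     (\<forall>a d. Dom X a = Ecod X d \<longrightarrow> ext X (Edom X d) (Cod X a) (push X a d)) \<and>
     (\<forall>c d. Cod X c = Edom X d \<longrightarrow> ext X (Dom X c) (Ecod X d) (pull X c d)) \<and>
     \<comment> \<open>the actions are group homomorphisms\<close>
     (\<forall>a d d'. Dom X a = Ecod X d \<and> ext X (Edom X d) (Ecod X d) d' \<longrightarrow>
        push X a (eadd X d d') = eadd X (push X a d) (push X a d')) \<and>
     (\<forall>c d d'. Cod X c = Edom X d \<and> ext X (Edom X d) (Ecod X d) d' \<longrightarrow>
        pull X c (eadd X d d') = eadd X (pull X c d) (pull X c d')) \<and>
     \<comment> \<open>functoriality\<close>
     (\<forall>d. push X (idm X (Ecod X d)) d = d) \<and>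
     (\<forall>d. pull X (idm X (Edom X d)) d = d) \<and>
     (\<forall>a b d. Dom X a = Ecod X d \<and> Cod X a = Dom X b \<longrightarrow>
        push X (cmp X b a) d = push X b (push X a d)) \<and>
     (\<forall>c c' d. Cod X c = Edom X d \<and> Cod X c' = Dom X c \<longrightarrow>
        pull X (cmp X c c') d = pull X c' (pull X c d)) \<and>
     \<comment> \<open>bifunctoriality\<close>
     (\<forall>a c d. Dom X a = Ecod X d \<and> Cod X c = Edom X d \<longrightarrow>
        push X a (pull X c d) = pull X c (push X a d)) \<and>
     \<comment> \<open>additivity in each variable\<close>
     (\<forall>a a' d. Dom X a = Ecod X d \<and> par X a a' \<longrightarrow>
        push X (madd X a a') d = eadd X (push X a d) (push X a' d)) \<and>
     (\<forall>c c' d. Cod X c = Edom X d \<and> par X c c' \<longrightarrow>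
        pull X (madd X c c') d = eadd X (pull X c d) (pull X c' d))"

definition seq_equiv :: "('o,'m,'e) extri \<Rightarrow> 'm \<Rightarrow> 'm \<Rightarrow> 'm \<Rightarrow> 'm \<Rightarrow> bool" where
  "seq_equiv X x y x' y' \<longleftrightarrow>
     Cod X x = Dom X y \<and> Cod X x' = Dom X y' \<and>
     Dom X x = Dom X x' \<and> Cod X y = Cod X y' \<and>
     (\<exists>b. hom X (Cod X x) (Cod X x') b \<and> is_iso X b \<and>
          cmp X b x = x' \<and> cmp X y' b = y)"

definition additive_realization :: "('o,'m,'e) extri \<Rightarrow> bool" where
  "additive_realization X \<longleftrightarrow>
     \<comment> \<open>s(delta) is an equivalence class of sequences A -> B -> C\<close>
     (\<forall>d. \<exists>x y. realizes X d x y) \<and>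
     (\<forall>d x y. realizes X d x y \<longrightarrow>
        Dom X x = Ecod X d \<and> Cod X x = Dom X y \<and> Cod X y = Edom X d) \<and>
     (\<forall>d x y x' y'. realizes X d x y \<and> realizes X d x' y' \<longrightarrow> seq_equiv X x y x' y') \<and>
     (\<forall>d x y x' y'. realizes X d x y \<and> seq_equiv X x y x' y' \<longrightarrow> realizes X d x' y') \<and>
     \<comment> \<open>realization condition\<close>
     (\<forall>d d' x y x' y' a c.
        realizes X d x y \<and> realizes X d' x' y' \<and>
        hom X (Ecod X d) (Ecod X d') a \<and> hom X (Edom X d) (Edom X d') c \<and>
        push X a d = pull X c d' \<longrightarrow>
        (\<exists>b. hom X (Cod X x) (Cod X x') b \<and> cmp X b x = cmp X x' a \<and> cmp X y' b = cmp X c y)) \<and>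
     \<comment> \<open>additivity: s(0) is the split sequence\<close>
     (\<forall>C A S i1 i2 p1 p2. is_biprod X A C S i1 i2 p1 p2 \<longrightarrow> realizes X (ezero X C A) i1 p2) \<and>
     \<comment> \<open>additivity: s(delta (+) delta') = s(delta) (+) s(delta')\<close>
     (\<forall>d d' x y x' y' SA ia1 ia2 pa1 pa2 SB ib1 ib2 pb1 pb2 SC ic1 ic2 pc1 pc2.
        realizes X d x y \<and> realizes X d' x' y' \<and>
        is_biprod X (Ecod X d) (Ecod X d') SA ia1 ia2 pa1 pa2 \<and>
        is_biprod X (Cod X x) (Cod X x') SB ib1 ib2 pb1 pb2 \<and>
        is_biprod X (Edom X d) (Edom X d') SC ic1 ic2 pc1 pc2 \<longrightarrow>
        realizes X (eadd X (push X ia1 (pull X pc1 d)) (push X ia2 (pull X pc2 d')))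
          (madd X (cmp X ib1 (cmp X x pa1)) (cmp X ib2 (cmp X x' pa2)))
          (madd X (cmp X ic1 (cmp X y pb1)) (cmp X ic2 (cmp X y' pb2))))"

definition ET3 :: "('o,'m,'e) extri \<Rightarrow> bool" where
  "ET3 X \<longleftrightarrow>
     (\<forall>d d' x y x' y' a b.
        realizes X d x y \<and> realizes X d' x' y' \<and>
        hom X (Ecod X d) (Ecod X d') a \<and> hom X (Cod X x) (Cod X x') b \<and>
        cmp X b x = cmp X x' a \<longrightarrow>
        (\<exists>c. hom X (Edom X d) (Edom X d') c \<and> cmp X c y = cmp X y' b \<and>
             push X a d = pull X c d'))"

definition ET3op :: "('o,'m,'e) extri \<Rightarrow> bool" where
  "ET3op X \<longleftrightarrow>
     (\<forall>d d' x y x' y' b c.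
        realizes X d x y \<and> realizes X d' x' y' \<and>
        hom X (Cod X x) (Cod X x') b \<and> hom X (Edom X d) (Edom X d') c \<and>
        cmp X c y = cmp X y' b \<longrightarrow>
        (\<exists>a. hom X (Ecod X d) (Ecod X d') a \<and> cmp X b x = cmp X x' a \<and>
             push X a d = pull X c d'))"

text \<open>(ET4): for E-triangles A -f-> B -f'-> D (d) and B -g-> C -g'-> F (d').\<close>
definition ET4 :: "('o,'m,'e) extri \<Rightarrow> bool" where
  "ET4 X \<longleftrightarrow>
     (\<forall>d f f' d' g g'.
        realizes X d f f' \<and> realizes X d' g g' \<and> Cod X f = Dom X g \<longrightarrow>
        (\<exists>h' dd e d''.
           realizes X d'' (cmp X g f) h' \<and>
           realizes X (push X f' d') dd e \<and>
           cmp X dd f' = cmp X h' g \<and>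
           cmp X e h' = g' \<and>
           pull X dd d'' = d \<and>
           push X f d'' = pull X e d'))"

text \<open>(ET4)^op: for E-triangles D -p-> B -q-> A (d) and F -r-> C -s-> B (d').\<close>
definition ET4op :: "('o,'m,'e) extri \<Rightarrow> bool" where
  "ET4op X \<longleftrightarrow>
     (\<forall>d p q d' r s.
        realizes X d p q \<and> realizes X d' r s \<and> Cod X s = Dom X q \<longrightarrow>
        (\<exists>h' dd e d''.
           realizes X d'' h' (cmp X q s) \<and>
           realizes X (pull X p d') e dd \<and>
           cmp X s h' = cmp X p dd \<and>
           cmp X h' e = r \<and>
           push X dd d'' = d \<and>
           pull X q d'' = push X e d'))"

definition extriangulated :: "('o,'m,'e) extri \<Rightarrow> bool" where
  "extriangulated X \<longleftrightarrow> additive_cat X \<and> biadditive_E X \<and> additive_realization X \<and>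
     ET3 X \<and> ET3op X \<and> ET4 X \<and> ET4op X"

definition injective_obj :: "('o,'m,'e) extri \<Rightarrow> 'o \<Rightarrow> bool" where
  "injective_obj X E \<longleftrightarrow> (\<forall>d. Ecod X d = E \<longrightarrow> d = ezero X (Edom X d) E)"

definition projective_obj :: "('o,'m,'e) extri \<Rightarrow> 'o \<Rightarrow> bool" where
  "projective_obj X P \<longleftrightarrow> (\<forall>d. Edom X d = P \<longrightarrow> d = ezero X P (Ecod X d))"

definition enough_injectives :: "('o,'m,'e) extri \<Rightarrow> bool" where
  "enough_injectives X \<longleftrightarrow>
     (\<forall>A. \<exists>d x y. realizes X d x y \<and> Ecod X d = A \<and> injective_obj X (Cod X x))"

definition enough_projectives :: "('o,'m,'e) extri \<Rightarrow> bool" where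
  "enough_projectives X \<longleftrightarrow>
     (\<forall>C. \<exists>d x y. realizes X d x y \<and> Edom X d = C \<and> projective_obj X (Cod X x))"

definition ideal :: "('o,'m,'e) extri \<Rightarrow> 'm set \<Rightarrow> bool" where
  "ideal X M \<longleftrightarrow>
     (\<forall>A B. mzero X A B \<in> M) \<and>
     (\<forall>f g. f \<in> M \<and> g \<in> M \<and> par X f g \<longrightarrow> madd X f g \<in> M) \<and>
     (\<forall>f g. f \<in> M \<and> Cod X f = Dom X g \<longrightarrow> cmp X g f \<in> M) \<and>
     (\<forall>f g. g \<in> M \<and> Cod X f = Dom X g \<longrightarrow> cmp X g f \<in> M)"

definition rperp :: "('o,'m,'e) extri \<Rightarrow> 'm set \<Rightarrow> 'm set" where
  "rperp X M = {g. \<forall>m\<in>M. \<forall>d. ext X (Cod X m) (Dom X g) d \<longrightarrow>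
       pull X m (push X g d) = ezero X (Dom X m) (Cod X g)}"

definition lperp :: "('o,'m,'e) extri \<Rightarrow> 'm set \<Rightarrow> 'm set" where
  "lperp X M = {g. \<forall>m\<in>M. \<forall>d. ext X (Cod X g) (Dom X m) d \<longrightarrow>
       pull X g (push X m d) = ezero X (Dom X g) (Cod X m)}"

definition cotorsion_pair :: "('o,'m,'e) extri \<Rightarrow> 'm set \<Rightarrow> 'm set \<Rightarrow> bool" where
  "cotorsion_pair X I J \<longleftrightarrow> ideal X I \<and> ideal X J \<and> I = lperp X J \<and> J = rperp X I"

definition special_precover :: "('o,'m,'e) extri \<Rightarrow> 'm set \<Rightarrow> 'm \<Rightarrow> 'o \<Rightarrow> bool" where
  "special_precover X I i C \<longleftrightarrow> i \<in> I \<and> Cod X i = C \<and>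
     (\<exists>d x y d' x' j b.
        realizes X d x y \<and> Edom X d = C \<and> realizes X d' x' i \<and>
        hom X (Ecod X d) (Ecod X d') j \<and> hom X (Cod X x) (Dom X i) b \<and>
        cmp X b x = cmp X x' j \<and> cmp X i b = cmp X (idm X C) y \<and>
        push X j d = pull X (idm X C) d' \<and>
        j \<in> rperp X I)"

definition special_preenvelope :: "('o,'m,'e) extri \<Rightarrow> 'm set \<Rightarrow> 'm \<Rightarrow> 'o \<Rightarrow> bool" where
  "special_preenvelope X J e A \<longleftrightarrow> e \<in> J \<and> Dom X e = A \<and>
     (\<exists>d y d' x w b j.
        realizes X d e y \<and> realizes X d' x w \<and> Ecod X d' = A \<and>
        hom X (Cod X e) (Cod X x) b \<and> hom X (Edom X d) (Edom X d') j \<and>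
        cmp X b e = cmp X x (idm X A) \<and> cmp X w b = cmp X j y \<and>
        push X (idm X A) d = pull X j d' \<and>
        j \<in> lperp X J)"

definition special_precovering :: "('o,'m,'e) extri \<Rightarrow> 'm set \<Rightarrow> bool" where
  "special_precovering X I \<longleftrightarrow> (\<forall>C. \<exists>i. special_precover X I i C)"

definition special_preenveloping :: "('o,'m,'e) extri \<Rightarrow> 'm set \<Rightarrow> bool" where
  "special_preenveloping X J \<longleftrightarrow> (\<forall>A. \<exists>e. special_preenvelope X J e A)"

end

theory Submission
  imports Defs
begin

text \<open>
  Let \<open>A \<rightarrow> P \<rightarrow> C\<close> with extension \<open>\<delta>\<close> be a projective presentation of \<open>C\<close> and let
  \<open>e : A \<rightarrow> X'\<close> be a special J-preenvelope of \<open>A\<close>. Realize the pushout \<open>e\<^sub>\<star>\<delta>\<close> as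
  \<open>X' \<rightarrow> M \<rightarrow> C\<close> with deflation \<open>i\<close>. The realization axiom gives the morphism of
  E-triangles \<open>(e, b, id\<^sub>C)\<close>, and \<open>e \<in> J = I\<^sup>\<perp>\<close>. Moreover \<open>i \<in> \<^sup>\<perp>J = I\<close>: since \<open>P\<close> is
  projective every extension of \<open>C\<close> is a pushout \<open>g\<^sub>\<star>\<delta>\<close>; for \<open>m \<in> J\<close> the morphism
  \<open>m g\<close> factors through \<open>e\<close>, so \<open>m\<^sub>\<star>g\<^sub>\<star>\<delta>\<close> is a pushout of \<open>e\<^sub>\<star>\<delta>\<close> and is killed by \<open>i\<^sup>\<star>\<close>.
  Hence \<open>i\<close> is a special I-precover of \<open>C\<close>. The converse is dual, pulling back an
  injective copresentation along a special I-precover.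
\<close>

lemma ideal_cmp_left: "ideal X M \<Longrightarrow> g \<in> M \<Longrightarrow> Cod X f = Dom X g \<Longrightarrow> cmp X g f \<in> M"
  unfolding ideal_def by blast

lemma ideal_cmp_right: "ideal X M \<Longrightarrow> f \<in> M \<Longrightarrow> Cod X f = Dom X g \<Longrightarrow> cmp X g f \<in> M"
  unfolding ideal_def by blast

locale extriangulated_category =
  fixes X :: "('o,'m,'e) extri"
  assumes extriangulated: "extriangulated X"
begin

lemma additive: "additive_cat X" and biadditive: "biadditive_E X"
  and realization: "additive_realization X" and ET3: "ET3 X" and ET3op: "ET3op X"
  using extriangulated by (simp_all add: extriangulated_def)

lemma Dom_idm [simp]: "Dom X (idm X A) = A" and Cod_idm [simp]: "Cod X (idm X A) = A"
  using additive unfolding additive_cat_def hom_def by simp_all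

lemma Dom_cmp [simp]: "Cod X f = Dom X g \<Longrightarrow> Dom X (cmp X g f) = Dom X f"
  and Cod_cmp [simp]: "Cod X f = Dom X g \<Longrightarrow> Cod X (cmp X g f) = Cod X g"
  using additive unfolding additive_cat_def hom_def by simp_all

lemma cmp_idm_left [simp]: "cmp X (idm X (Cod X f)) f = f"
  and cmp_idm_right [simp]: "cmp X f (idm X (Dom X f)) = f"
  using additive unfolding additive_cat_def by simp_all

lemma cmp_assoc: "Cod X f = Dom X g \<Longrightarrow> Cod X g = Dom X h \<Longrightarrow>
    cmp X h (cmp X g f) = cmp X (cmp X h g) f"
  using additive unfolding additive_cat_def by simp

lemma biprod_exists: "\<exists>S i1 i2 p1 p2. is_biprod X A B S i1 i2 p1 p2"
  using additive unfolding additive_cat_def by meson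

lemma Edom_ezero [simp]: "Edom X (ezero X C A) = C" and Ecod_ezero [simp]: "Ecod X (ezero X C A) = A"
  using biadditive unfolding biadditive_E_def ext_def by simp_all

lemma ext_eneg: "ext X (Edom X d) (Ecod X d) (eneg X d)"
  using biadditive unfolding biadditive_E_def by simp

lemma eadd_assoc: "ext X (Edom X d) (Ecod X d) d' \<Longrightarrow> ext X (Edom X d) (Ecod X d) d'' \<Longrightarrow>
    eadd X (eadd X d d') d'' = eadd X d (eadd X d' d'')"
  using biadditive unfolding biadditive_E_def by simp

lemma eadd_ezero: "eadd X d (ezero X (Edom X d) (Ecod X d)) = d"
  and eadd_eneg: "eadd X d (eneg X d) = ezero X (Edom X d) (Ecod X d)"
  using biadditive unfolding biadditive_E_def by simp_all

lemma Edom_push [simp]: "Dom X a = Ecod X d \<Longrightarrow> Edom X (push X a d) = Edom X d"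
  and Ecod_push [simp]: "Dom X a = Ecod X d \<Longrightarrow> Ecod X (push X a d) = Cod X a"
  and Edom_pull [simp]: "Cod X c = Edom X d \<Longrightarrow> Edom X (pull X c d) = Dom X c"
  and Ecod_pull [simp]: "Cod X c = Edom X d \<Longrightarrow> Ecod X (pull X c d) = Ecod X d"
  using biadditive unfolding biadditive_E_def ext_def by simp_all

lemma push_eadd: "Dom X a = Ecod X d \<Longrightarrow> ext X (Edom X d) (Ecod X d) d' \<Longrightarrow>
    push X a (eadd X d d') = eadd X (push X a d) (push X a d')"
  and pull_eadd: "Cod X c = Edom X d \<Longrightarrow> ext X (Edom X d) (Ecod X d) d' \<Longrightarrow>
    pull X c (eadd X d d') = eadd X (pull X c d) (pull X c d')"
  using biadditive unfolding biadditive_E_def by simp_all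

lemma push_idm [simp]: "push X (idm X (Ecod X d)) d = d"
  and pull_idm [simp]: "pull X (idm X (Edom X d)) d = d"
  using biadditive unfolding biadditive_E_def by simp_all

lemma push_cmp: "Dom X a = Ecod X d \<Longrightarrow> Cod X a = Dom X b \<Longrightarrow>
    push X (cmp X b a) d = push X b (push X a d)"
  and pull_cmp: "Cod X c = Edom X d \<Longrightarrow> Cod X c' = Dom X c \<Longrightarrow>
    pull X (cmp X c c') d = pull X c' (pull X c d)"
  using biadditive unfolding biadditive_E_def by simp_all

lemma push_pull_comm: "Dom X a = Ecod X d \<Longrightarrow> Cod X c = Edom X d \<Longrightarrow>
    push X a (pull X c d) = pull X c (push X a d)"
  using biadditive unfolding biadditive_E_def by simp

lemma realizes_typing: "realizes X d x y \<Longrightarrow>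
    Dom X x = Ecod X d \<and> Cod X x = Dom X y \<and> Cod X y = Edom X d"
  using realization unfolding additive_realization_def by meson

lemma realizes_exists: "\<exists>x y. realizes X d x y"
  using realization unfolding additive_realization_def by meson

lemma realizes_split: "is_biprod X A C S i1 i2 p1 p2 \<Longrightarrow> realizes X (ezero X C A) i1 p2"
  using realization unfolding additive_realization_def by meson

lemma realization_condition: "realizes X d x y \<Longrightarrow> realizes X d' x' y' \<Longrightarrow>
    hom X (Ecod X d) (Ecod X d') a \<Longrightarrow> hom X (Edom X d) (Edom X d') c \<Longrightarrow>
    push X a d = pull X c d' \<Longrightarrow>
    \<exists>b. hom X (Cod X x) (Cod X x') b \<and> cmp X b x = cmp X x' a \<and> cmp X y' b = cmp X c y"
  using realization unfolding additive_realization_def by meson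

lemma ET3_morphism: "realizes X d x y \<Longrightarrow> realizes X d' x' y' \<Longrightarrow>
    hom X (Ecod X d) (Ecod X d') a \<Longrightarrow> hom X (Cod X x) (Cod X x') b \<Longrightarrow>
    cmp X b x = cmp X x' a \<Longrightarrow>
    \<exists>c. hom X (Edom X d) (Edom X d') c \<and> cmp X c y = cmp X y' b \<and> push X a d = pull X c d'"
  using ET3 unfolding ET3_def by meson

lemma ET3op_morphism: "realizes X d x y \<Longrightarrow> realizes X d' x' y' \<Longrightarrow>
    hom X (Cod X x) (Cod X x') b \<Longrightarrow> hom X (Edom X d) (Edom X d') c \<Longrightarrow>
    cmp X c y = cmp X y' b \<Longrightarrow>
    \<exists>a. hom X (Ecod X d) (Ecod X d') a \<and> cmp X b x = cmp X x' a \<and> push X a d = pull X c d'"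
  using ET3op unfolding ET3op_def by meson

lemma ext_idempotent_eq_ezero:
  assumes "eadd X u u = u"
  shows "u = ezero X (Edom X u) (Ecod X u)"
proof -
  have u: "ext X (Edom X u) (Ecod X u) u" by (simp add: ext_def)
  have "ezero X (Edom X u) (Ecod X u) = eadd X (eadd X u u) (eneg X u)"
    using assms by (simp add: eadd_eneg)
  also have "\<dots> = eadd X u (ezero X (Edom X u) (Ecod X u))"
    using eadd_assoc[OF u ext_eneg] by (simp add: eadd_eneg)
  finally show ?thesis by (simp add: eadd_ezero)
qed

lemma push_ezero [simp]: "Dom X a = A \<Longrightarrow> push X a (ezero X C A) = ezero X C (Cod X a)"
  using ext_idempotent_eq_ezero[of "push X a (ezero X C A)"]
    push_eadd[of a "ezero X C A" "ezero X C A"] eadd_ezero[of "ezero X C A"]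
  by (simp add: ext_def)

lemma pull_ezero [simp]: "Cod X c = C \<Longrightarrow> pull X c (ezero X C A) = ezero X (Dom X c) A"
  using ext_idempotent_eq_ezero[of "pull X c (ezero X C A)"]
    pull_eadd[of c "ezero X C A" "ezero X C A"] eadd_ezero[of "ezero X C A"]
  by (simp add: ext_def)

lemma pull_deflation_eq_ezero:
  assumes r: "realizes X d x y"
  shows "pull X y d = ezero X (Dom X y) (Ecod X d)"
proof -
  obtain S i1 i2 p1 p2 where bp: "is_biprod X (Ecod X d) (Dom X y) S i1 i2 p1 p2"
    using biprod_exists by blast
  have "hom X (Cod X i1) (Cod X x) p2" "hom X (Edom X (ezero X (Dom X y) (Ecod X d))) (Edom X d) y"
    using bp realizes_typing[OF r] unfolding is_biprod_def hom_def by auto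
  then obtain a where "hom X (Ecod X d) (Ecod X d) a"
      "push X a (ezero X (Dom X y) (Ecod X d)) = pull X y d"
    using ET3op_morphism[OF realizes_split[OF bp] r _ _ refl] by auto
  then show ?thesis by (simp add: hom_def)
qed

lemma push_inflation_eq_ezero:
  assumes r: "realizes X d x y"
  shows "push X x d = ezero X (Edom X d) (Cod X x)"
proof -
  obtain S i1 i2 p1 p2 where bp: "is_biprod X (Cod X x) (Edom X d) S i1 i2 p1 p2"
    using biprod_exists by blast
  have "hom X (Ecod X d) (Ecod X (ezero X (Edom X d) (Cod X x))) x" "hom X (Cod X x) (Cod X i1) i1"
    using bp realizes_typing[OF r] unfolding is_biprod_def hom_def by auto
  then obtain c where "hom X (Edom X d) (Edom X d) c"
      "push X x d = pull X c (ezero X (Edom X d) (Cod X x))"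
    using ET3_morphism[OF r realizes_split[OF bp] _ _ refl] by auto
  then show ?thesis by (simp add: hom_def)
qed

text \<open>Compare the triangle with the split one via \<open>(f, id)\<close>; the projection of the
  induced middle morphism is the factorization.\<close>

lemma factors_through_inflation:
  assumes r: "realizes X d x y" and f: "Dom X f = Ecod X d"
    and z: "push X f d = ezero X (Edom X d) (Cod X f)"
  shows "\<exists>g. Dom X g = Cod X x \<and> Cod X g = Cod X f \<and> f = cmp X g x"
proof -
  obtain S i1 i2 p1 p2 where bp: "is_biprod X (Cod X f) (Edom X d) S i1 i2 p1 p2"
    using biprod_exists by blast
  have bi: "Dom X i1 = Cod X f" "Cod X i1 = S" "Dom X p1 = S" "Cod X p1 = Cod X f"
    "cmp X p1 i1 = idm X (Cod X f)"
    using bp unfolding is_biprod_def hom_def by auto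
  obtain b where b: "Dom X b = Cod X x" "Cod X b = S" "cmp X b x = cmp X i1 f"
    using realization_condition[OF r realizes_split[OF bp], of f "idm X (Edom X d)"] f z bi
    by (auto simp: hom_def)
  have x: "Dom X x = Ecod X d" using realizes_typing[OF r] by simp
  have "cmp X (cmp X p1 b) x = cmp X p1 (cmp X i1 f)"
    using cmp_assoc[of x b p1] b bi by simp
  also have "\<dots> = f"
    using cmp_assoc[of f i1 p1] bi f by simp
  finally show ?thesis
    using b bi by (intro exI[of _ "cmp X p1 b"]) simp
qed

lemma factors_through_deflation:
  assumes r: "realizes X d x y" and h: "Cod X h = Edom X d"
    and z: "pull X h d = ezero X (Dom X h) (Ecod X d)"
  shows "\<exists>g. Dom X g = Dom X h \<and> Cod X g = Dom X y \<and> h = cmp X y g"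
proof -
  obtain S i1 i2 p1 p2 where bp: "is_biprod X (Ecod X d) (Dom X h) S i1 i2 p1 p2"
    using biprod_exists by blast
  have bi: "Dom X i2 = Dom X h" "Cod X i2 = S" "Dom X p2 = S" "Cod X p2 = Dom X h" "Cod X i1 = S"
    "cmp X p2 i2 = idm X (Dom X h)"
    using bp unfolding is_biprod_def hom_def by auto
  obtain b where b: "Dom X b = S" "Cod X b = Cod X x" "cmp X y b = cmp X h p2"
    using realization_condition[OF realizes_split[OF bp] r, of "idm X (Ecod X d)" h] h z bi
    by (auto simp: hom_def)
  have y: "Cod X x = Dom X y" using realizes_typing[OF r] by simp
  have "cmp X y (cmp X b i2) = cmp X (cmp X h p2) i2"
    using cmp_assoc[of i2 b y] b bi y by simp
  also have "\<dots> = h"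
    using cmp_assoc[of i2 p2 h] bi by simp
  finally show ?thesis
    using b bi y by (intro exI[of _ "cmp X b i2"]) simp
qed

lemma ext_eq_push_of_projective:
  assumes r: "realizes X d x y" and P: "projective_obj X (Cod X x)"
    and t: "Edom X t = Edom X d"
  shows "\<exists>g. Dom X g = Ecod X d \<and> Cod X g = Ecod X t \<and> t = push X g d"
proof -
  obtain x0 y0 where r0: "realizes X t x0 y0" using realizes_exists by blast
  have rt: "Dom X x = Ecod X d" "Cod X x = Dom X y" "Cod X y = Edom X d"
    using realizes_typing[OF r] by auto
  have "Edom X (pull X y t) = Cod X x"
    using rt t by simp
  with P have "pull X y t = ezero X (Cod X x) (Ecod X (pull X y t))"
    unfolding projective_obj_def by blast
  then have "pull X y t = ezero X (Dom X y) (Ecod X t)"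
    using rt t by simp
  then obtain g where g: "Dom X g = Dom X y" "Cod X g = Dom X y0" "y = cmp X y0 g"
    using factors_through_deflation[OF r0, of y] rt t by auto
  have hb: "hom X (Cod X x) (Cod X x0) g" and hc: "hom X (Edom X d) (Edom X t) (idm X (Edom X d))"
    using g rt t realizes_typing[OF r0] unfolding hom_def by auto
  have "cmp X (idm X (Edom X d)) y = y"
    using cmp_idm_left[of y] rt(3) by simp
  also have "\<dots> = cmp X y0 g" by (rule g(3))
  finally obtain a where a: "hom X (Ecod X d) (Ecod X t) a"
      and "push X a d = pull X (idm X (Edom X t)) t"
    using ET3op_morphism[OF r r0 hb hc] t by auto
  then have "t = push X a d" by simp
  with a show ?thesis unfolding hom_def by blast
qed

lemma ext_eq_pull_of_injective:
  assumes r: "realizes X d x y" and E: "injective_obj X (Cod X x)"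
    and t: "Ecod X t = Ecod X d"
  shows "\<exists>g. Dom X g = Edom X t \<and> Cod X g = Edom X d \<and> t = pull X g d"
proof -
  obtain x0 y0 where r0: "realizes X t x0 y0" using realizes_exists by blast
  have rt: "Dom X x = Ecod X d" "Cod X x = Dom X y" "Cod X y = Edom X d"
    using realizes_typing[OF r] by auto
  have "Ecod X (push X x t) = Cod X x"
    using rt t by simp
  with E have "push X x t = ezero X (Edom X (push X x t)) (Cod X x)"
    unfolding injective_obj_def by blast
  then have "push X x t = ezero X (Edom X t) (Cod X x)"
    using rt t by simp
  then obtain g where g: "Dom X g = Cod X x0" "Cod X g = Cod X x" "x = cmp X g x0"
    using factors_through_inflation[OF r0, of x] rt t by auto
  have ha: "hom X (Ecod X t) (Ecod X d) (idm X (Ecod X d))" and hb: "hom X (Cod X x0) (Cod X x) g"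
    using g t unfolding hom_def by auto
  have "cmp X x (idm X (Ecod X d)) = x"
    using cmp_idm_right[of x] rt(1) by simp
  also have "\<dots> = cmp X g x0" by (rule g(3))
  finally obtain c where c: "hom X (Edom X t) (Edom X d) c"
      and "push X (idm X (Ecod X t)) t = pull X c d"
    using ET3_morphism[OF r0 r ha hb] t by auto
  then have "t = pull X c d" by simp
  with c show ?thesis unfolding hom_def by blast
qed

lemma special_preenvelope_factorization:
  assumes "special_preenvelope X J e A" and "h \<in> J" and "Dom X h = A"
  shows "\<exists>f. Dom X f = Cod X e \<and> Cod X f = Cod X h \<and> h = cmp X f e"
proof -
  obtain d y d' x w j where r: "realizes X d e y" and A: "Ecod X d' = A" "Dom X e = A"
      and j: "Dom X j = Edom X d" "Cod X j = Edom X d'" and d: "d = pull X j d'"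
      and jJ: "j \<in> lperp X J"
    using assms(1) realizes_typing unfolding special_preenvelope_def hom_def by (metis push_idm)
  have "push X h d = pull X j (push X h d')"
    using d j A assms(3) push_pull_comm by simp
  also have "\<dots> = ezero X (Edom X d) (Cod X h)"
    using jJ assms(2,3) A j unfolding lperp_def ext_def by auto
  finally show ?thesis
    using factors_through_inflation[OF r] assms(3) A realizes_typing[OF r] by simp
qed

lemma special_precover_factorization:
  assumes "special_precover X I i C" and "h \<in> I" and "Cod X h = C"
  shows "\<exists>f. Dom X f = Dom X h \<and> Cod X f = Dom X i \<and> h = cmp X i f"
proof -
  obtain d x y d' x' j where r: "realizes X d' x' i" and C: "Edom X d = C" "Cod X i = C"
      and j: "Dom X j = Ecod X d" "Cod X j = Ecod X d'" and d: "d' = push X j d"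
      and jI: "j \<in> rperp X I"
    using assms(1) realizes_typing unfolding special_precover_def hom_def by (metis pull_idm)
  have "pull X h d' = pull X h (push X j d)"
    using d by simp
  also have "\<dots> = ezero X (Dom X h) (Ecod X d')"
    using jI assms(2,3) C j unfolding rperp_def ext_def by auto
  finally show ?thesis
    using factors_through_deflation[OF r] assms(3) C realizes_typing[OF r] by simp
qed

lemma deflation_of_pushout_in_lperp:
  assumes J: "ideal X J" and r: "realizes X d x y" and P: "projective_obj X (Cod X x)"
    and e: "Dom X e = Ecod X d"
    and factors: "\<And>h. h \<in> J \<Longrightarrow> Dom X h = Ecod X d \<Longrightarrow>
      \<exists>f. Dom X f = Cod X e \<and> Cod X f = Cod X h \<and> h = cmp X f e"
    and ri: "realizes X (push X e d) x' i"
  shows "i \<in> lperp X J"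
  unfolding lperp_def
proof (intro CollectI ballI allI impI)
  fix m t
  assume mJ: "m \<in> J" and t: "ext X (Cod X i) (Dom X m) t"
  have i: "Cod X i = Edom X d"
    using realizes_typing[OF ri] e by simp
  obtain g where g: "Dom X g = Ecod X d" "Cod X g = Dom X m" "t = push X g d"
    using ext_eq_push_of_projective[OF r P, of t] t i unfolding ext_def by auto
  obtain f where f: "Dom X f = Cod X e" "Cod X f = Cod X m" "cmp X m g = cmp X f e"
    using factors[of "cmp X m g"] ideal_cmp_left[OF J mJ] g e by auto
  have "push X m t = push X (cmp X m g) d"
    using g push_cmp by simp
  also have "\<dots> = push X f (push X e d)"
    using f e push_cmp by simp
  finally have "pull X i (push X m t) = push X f (pull X i (push X e d))"
    using f e i push_pull_comm by simp
  also have "\<dots> = ezero X (Dom X i) (Cod X m)"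
    using pull_deflation_eq_ezero[OF ri] f e by simp
  finally show "pull X i (push X m t) = ezero X (Dom X i) (Cod X m)" .
qed

lemma inflation_of_pullback_in_rperp:
  assumes I: "ideal X I" and r: "realizes X d x y" and E: "injective_obj X (Cod X x)"
    and i: "Cod X i = Edom X d"
    and factors: "\<And>h. h \<in> I \<Longrightarrow> Cod X h = Edom X d \<Longrightarrow>
      \<exists>f. Dom X f = Dom X h \<and> Cod X f = Dom X i \<and> h = cmp X i f"
    and re: "realizes X (pull X i d) e w"
  shows "e \<in> rperp X I"
  unfolding rperp_def
proof (intro CollectI ballI allI impI)
  fix m t
  assume mI: "m \<in> I" and t: "ext X (Cod X m) (Dom X e) t"
  have e: "Dom X e = Ecod X d"
    using realizes_typing[OF re] i by simp
  obtain g where g: "Dom X g = Cod X m" "Cod X g = Edom X d" "t = pull X g d"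
    using ext_eq_pull_of_injective[OF r E, of t] t e unfolding ext_def by auto
  obtain f where f: "Dom X f = Dom X m" "Cod X f = Dom X i" "cmp X g m = cmp X i f"
    using factors[of "cmp X g m"] ideal_cmp_right[OF I mI] g i by auto
  have "pull X m t = pull X (cmp X g m) d"
    using g pull_cmp by simp
  also have "\<dots> = pull X f (pull X i d)"
    using f i pull_cmp by simp
  finally have mt: "pull X m t = pull X f (pull X i d)" .
  have "pull X m (push X e t) = push X e (pull X m t)"
    using e t push_pull_comm[of e t m] unfolding ext_def by simp
  also have "\<dots> = pull X f (push X e (pull X i d))"
    using mt f e i push_pull_comm by simp
  also have "\<dots> = ezero X (Dom X m) (Cod X e)"
    using push_inflation_eq_ezero[OF re] f i by simp
  finally show "pull X m (push X e t) = ezero X (Dom X m) (Cod X e)" .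
qed

lemma special_precovering_if_special_preenveloping:
  assumes "enough_projectives X" and IJ: "cotorsion_pair X I J"
    and "special_preenveloping X J"
  shows "special_precovering X I"
  unfolding special_precovering_def
proof
  fix C
  have J: "ideal X J" "I = lperp X J" "J = rperp X I"
    using IJ unfolding cotorsion_pair_def by blast+
  obtain d x y where r: "realizes X d x y" and C: "Edom X d = C"
      and P: "projective_obj X (Cod X x)"
    using assms(1) unfolding enough_projectives_def by blast
  obtain e where se: "special_preenvelope X J e (Ecod X d)"
    using assms(3) unfolding special_preenveloping_def by blast
  then have "e \<in> rperp X I" and e: "Dom X e = Ecod X d"
    using J(3) unfolding special_preenvelope_def by simp_all
  obtain x' i where ri: "realizes X (push X e d) x' i"
    using realizes_exists by blast
  have "i \<in> I"
    using deflation_of_pushout_in_lperp[OF J(1) r P e special_preenvelope_factorization[OF se] ri] J(2)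
    by simp
  moreover have "Cod X i = C"
    using realizes_typing[OF ri] e C by simp
  moreover have "push X e d = pull X (idm X C) (push X e d)"
    using pull_idm[of "push X e d"] e C by simp
  moreover have he: "hom X (Ecod X d) (Ecod X (push X e d)) e"
    using e unfolding hom_def by simp
  moreover obtain b where "hom X (Cod X x) (Dom X i) b" "cmp X b x = cmp X x' e"
      "cmp X i b = cmp X (idm X C) y"
    using realization_condition[OF r ri he, of "idm X C"] calculation(3) realizes_typing[OF ri] e C
    by (auto simp: hom_def)
  ultimately show "\<exists>i. special_precover X I i C"
    unfolding special_precover_def using r C ri \<open>e \<in> rperp X I\<close> by blast
qed

lemma special_preenveloping_if_special_precovering:
  assumes "enough_injectives X" and IJ: "cotorsion_pair X I J"
    and "special_precovering X I"
  shows "special_preenveloping X J"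
  unfolding special_preenveloping_def
proof
  fix A
  have I: "ideal X I" "I = lperp X J" "J = rperp X I"
    using IJ unfolding cotorsion_pair_def by blast+
  obtain d x y where r: "realizes X d x y" and A: "Ecod X d = A"
      and E: "injective_obj X (Cod X x)"
    using assms(1) unfolding enough_injectives_def by blast
  obtain i where si: "special_precover X I i (Edom X d)"
    using assms(3) unfolding special_precovering_def by blast
  then have "i \<in> lperp X J" and i: "Cod X i = Edom X d"
    using I(2) unfolding special_precover_def by simp_all
  obtain e w where re: "realizes X (pull X i d) e w"
    using realizes_exists by blast
  have "e \<in> J"
    using inflation_of_pullback_in_rperp[OF I(1) r E i special_precover_factorization[OF si] re] I(3)
    by simp
  moreover have "Dom X e = A"
    using realizes_typing[OF re] i A by simp
  moreover have "push X (idm X A) (pull X i d) = pull X i d"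
    using push_idm[of "pull X i d"] i A by simp
  moreover have hi: "hom X (Edom X (pull X i d)) (Edom X d) i"
    using i unfolding hom_def by simp
  moreover obtain b where "hom X (Cod X e) (Cod X x) b" "cmp X b e = cmp X x (idm X A)"
      "cmp X y b = cmp X i w"
    using realization_condition[OF re r _ hi, of "idm X A"] calculation(3) i A
    by (auto simp: hom_def)
  ultimately show "\<exists>e. special_preenvelope X J e A"
    unfolding special_preenvelope_def using r A re \<open>i \<in> lperp X J\<close> by blast
qed

end

theorem mainTheorem12:
  fixes X :: "('o,'m,'e) extri" and I J :: "'m set"
  assumes "extriangulated X"
    and "enough_projectives X"
    and "enough_injectives X"
    and "cotorsion_pair X I J"
  shows "special_precovering X I \<longleftrightarrow> special_preenveloping X J"
proof -
  interpret extriangulated_category X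
    by (rule extriangulated_category.intro) (rule assms(1))
  show ?thesis
    using special_precovering_if_special_preenveloping[OF assms(2,4)]
      special_preenveloping_if_special_precovering[OF assms(3,4)] by blast
qed

end
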